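(* Let $\mathcal{T}$ be a directed poset, $X:\mathcal{T}\to\mathbf{Set}_*$ a diagram of pointed sets and $A$ an abelian group. Then the natural map $\rho:(\lim_\mathcal{T}X)\wedge A\to\lim_\mathcal{T}(X\wedge A)$ is injective.
   Context: A directed poset $\mathcal{T}$ is regarded as a category with a single morphism $t\to s$ whenever $t\ge s$; for $t\geq s$ write $\phi_{t,s}:X(t)\to X(s)$ for the structure map. For a pointed set $Y$ (base point $*$), $Y\wedge A:=\bigoplus_{Y\setminus\{*\}}A$, whose elements are finitely supported pointed maps $Y\to A$; for $s\in Y$, $v\in A$, $sv$ is the element with value $v$ at $s$ and $0$ elsewhere ($*v=0$); a pointed map $f$ induces $f_*(sv)=f(s)v$. The natural map $\rho$ is defined by $\rho(xv)(t)=x(t)v$ for $x\in\lim_\mathcal{T}X$, $v\in A$, $t\in\mathcal{T}$. *)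

theory Defs
  imports "HOL-Library.FuncSet"
begin

definition directed_poset :: "'t::order set \<Rightarrow> bool" where
  "directed_poset T \<longleftrightarrow> T \<noteq> {} \<and> (\<forall>a\<in>T. \<forall>b\<in>T. \<exists>c\<in>T. a \<le> c \<and> b \<le> c)"

definition pointed_diagram ::
  "'t::order set \<Rightarrow> ('t \<Rightarrow> 'x set) \<Rightarrow> ('t \<Rightarrow> 'x) \<Rightarrow> ('t \<Rightarrow> 't \<Rightarrow> 'x \<Rightarrow> 'x) \<Rightarrow> bool" where
  "pointed_diagram T X base phi \<longleftrightarrow>
     (\<forall>t\<in>T. base t \<in> X t) \<and>
     (\<forall>t\<in>T. \<forall>s\<in>T. s \<le> t \<longrightarrow> phi t s \<in> X t \<rightarrow> X s \<and> phi t s (base t) = base s) \<and>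
     (\<forall>t\<in>T. \<forall>x\<in>X t. phi t t x = x) \<and>
     (\<forall>r\<in>T. \<forall>s\<in>T. \<forall>t\<in>T. r \<le> s \<longrightarrow> s \<le> t \<longrightarrow> (\<forall>x\<in>X t. phi s r (phi t s x) = phi t r x))"

text \<open>The limit: compatible families (extensional on T); base point restrict base T.\<close>
definition diag_lim ::
  "'t::order set \<Rightarrow> ('t \<Rightarrow> 'x set) \<Rightarrow> ('t \<Rightarrow> 't \<Rightarrow> 'x \<Rightarrow> 'x) \<Rightarrow> ('t \<Rightarrow> 'x) set" where
  "diag_lim T X phi = {x \<in> Pi\<^sub>E T X. \<forall>t\<in>T. \<forall>s\<in>T. s \<le> t \<longrightarrow> phi t s (x t) = x s}"

text \<open>Y \<and> A for a pointed set (Y, y0): finitely supported maps Y \<rightarrow> A vanishing at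
  the base point (and, for extensionality, outside Y).\<close>
definition smash :: "'y set \<Rightarrow> 'y \<Rightarrow> ('y \<Rightarrow> 'a::ab_group_add) set" where
  "smash Y y0 = {g. g y0 = 0 \<and> (\<forall>y. y \<notin> Y \<longrightarrow> g y = 0) \<and> finite {y. g y \<noteq> 0}}"

text \<open>The map f_* induced by a pointed map f (target base point z0):
  f_*(g)(y) = sum of g s over s with f s = y, for y \<noteq> z0; zero at z0.
  This is the additive extension of f_*(s v) = f(s) v.\<close>
definition push :: "('y \<Rightarrow> 'z) \<Rightarrow> 'z \<Rightarrow> ('y \<Rightarrow> 'a::ab_group_add) \<Rightarrow> 'z \<Rightarrow> 'a" where
  "push f z0 g = (\<lambda>z. if z = z0 then 0 else (\<Sum>s\<in>{s. g s \<noteq> 0 \<and> f s = z}. g s))"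

text \<open>The natural map rho : (lim X) \<and> A \<rightarrow> lim (X \<and> A), rho(g)(t) = (ev_t)_* g,
  so rho(x v)(t) = x(t) v.\<close>
definition rho :: "'t set \<Rightarrow> ('t \<Rightarrow> 'x) \<Rightarrow> (('t \<Rightarrow> 'x) \<Rightarrow> 'a::ab_group_add) \<Rightarrow> 't \<Rightarrow> 'x \<Rightarrow> 'a" where
  "rho T base g = (\<lambda>t\<in>T. push (\<lambda>x. x t) (base t) g)"

end

theory Submission
  imports Defs
begin

text \<open>Finitely many elements of the limit are already separated at a single index t, since
  pairwise differences persist upwards along the structure maps and T is directed. Evaluation
  at t is then injective on the supports of g and h together with the base point, so the
  component rho(g)(t) recovers every coefficient of g at a non-base element of the limit.\<close>

lemma directed_poset_finite_common_upper:
  assumes dir: "directed_poset T" and "finite P"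
    and nonempty: "\<And>p. p \<in> P \<Longrightarrow> \<exists>t\<in>T. t \<in> D p"
    and upward: "\<And>p t t'. p \<in> P \<Longrightarrow> t \<in> D p \<Longrightarrow> t' \<in> T \<Longrightarrow> t \<le> t' \<Longrightarrow> t' \<in> D p"
  shows "\<exists>t\<in>T. \<forall>p\<in>P. t \<in> D p"
  using assms(2) nonempty upward
proof (induction P rule: finite_induct)
  case empty
  then show ?case using dir unfolding directed_poset_def by auto
next
  case (insert a P)
  then obtain t1 where t1: "t1 \<in> T" "\<forall>p\<in>P. t1 \<in> D p" by blast
  obtain t2 where t2: "t2 \<in> T" "t2 \<in> D a" using insert.prems by blast
  obtain c where c: "c \<in> T" "t1 \<le> c" "t2 \<le> c"
    using dir t1 t2 unfolding directed_poset_def by blast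
  have "c \<in> D p" if "p \<in> insert a P" for p
    using that insert.prems(2) t1 t2 c by blast
  then show ?case using c by blast
qed

lemma restrict_base_in_diag_lim:
  assumes "pointed_diagram T X base phi"
  shows "restrict base T \<in> diag_lim T X phi"
  using assms unfolding pointed_diagram_def diag_lim_def by auto

lemma diag_lim_separated_at_index:
  fixes F :: "('t::order \<Rightarrow> 'x) set"
  assumes dir: "directed_poset T" and "finite F" and F_lim: "F \<subseteq> diag_lim T X phi"
  shows "\<exists>t\<in>T. inj_on (\<lambda>x. x t) F"
proof -
  define P where "P = {(x, y). x \<in> F \<and> y \<in> F \<and> x \<noteq> y}"
  define D :: "('t \<Rightarrow> 'x) \<times> ('t \<Rightarrow> 'x) \<Rightarrow> 't set"
    where "D = (\<lambda>(x, y). {t \<in> T. x t \<noteq> y t})"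
  have "\<exists>t\<in>T. \<forall>p\<in>P. t \<in> D p"
  proof (rule directed_poset_finite_common_upper[OF dir])
    have "P \<subseteq> F \<times> F" unfolding P_def by auto
    then show "finite P" using \<open>finite F\<close> by (meson finite_SigmaI finite_subset)
  next
    fix p assume "p \<in> P"
    then obtain x y where p: "p = (x, y)" "x \<in> diag_lim T X phi" "y \<in> diag_lim T X phi" "x \<noteq> y"
      using F_lim unfolding P_def by auto
    then obtain t where "x t \<noteq> y t" by auto
    moreover have "t \<in> T"
      using p \<open>x t \<noteq> y t\<close> unfolding diag_lim_def PiE_def extensional_def by auto
    ultimately show "\<exists>t\<in>T. t \<in> D p" using p unfolding D_def by auto
  next
    fix p t t' assume "p \<in> P" "t \<in> D p" "t' \<in> T" "t \<le> t'"
    then obtain x y where p: "p = (x, y)" "x \<in> diag_lim T X phi" "y \<in> diag_lim T X phi"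
        "x t \<noteq> y t" "t \<in> T"
      using F_lim unfolding P_def D_def by auto
    have "phi t' t (x t') = x t" "phi t' t (y t') = y t"
      using p \<open>t' \<in> T\<close> \<open>t \<le> t'\<close> unfolding diag_lim_def by auto
    with p have "x t' \<noteq> y t'" by metis
    then show "t' \<in> D p" using p \<open>t' \<in> T\<close> unfolding D_def by auto
  qed
  then show ?thesis unfolding P_def D_def inj_on_def by auto
qed

lemma push_at_image_of_injective:
  assumes "inj_on f F" and support: "\<And>s. g s \<noteq> 0 \<Longrightarrow> s \<in> F"
    and "x \<in> F" and "f x \<noteq> z0"
  shows "push f z0 g (f x) = g x"
proof -
  have "{s. g s \<noteq> 0 \<and> f s = f x} = (if g x \<noteq> 0 then {x} else {})"
    using support \<open>x \<in> F\<close> inj_onD[OF \<open>inj_on f F\<close>] by auto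
  then show ?thesis using \<open>f x \<noteq> z0\<close> unfolding push_def by auto
qed

theorem mainTheorem7:
  fixes T :: "'t::order set" and X :: "'t \<Rightarrow> 'x set" and base :: "'t \<Rightarrow> 'x"
    and phi :: "'t \<Rightarrow> 't \<Rightarrow> 'x \<Rightarrow> 'x"
  assumes "directed_poset T" and "pointed_diagram T X base phi"
  shows "inj_on (rho T base :: (('t \<Rightarrow> 'x) \<Rightarrow> 'a::ab_group_add) \<Rightarrow> _)
           (smash (diag_lim T X phi) (restrict base T))"
proof (rule inj_onI, rule ccontr)
  fix g h :: "('t \<Rightarrow> 'x) \<Rightarrow> 'a"
  define b where "b = restrict base T"
  assume g: "g \<in> smash (diag_lim T X phi) b" and h: "h \<in> smash (diag_lim T X phi) b"
    and eq: "rho T base g = rho T base h" and "g \<noteq> h"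
  define F where "F = {y. g y \<noteq> 0} \<union> {y. h y \<noteq> 0} \<union> {b}"
  have "finite F" "F \<subseteq> diag_lim T X phi"
    using g h restrict_base_in_diag_lim[OF assms(2)] unfolding F_def b_def smash_def by auto
  then obtain t where t: "t \<in> T" "inj_on (\<lambda>x. x t) F"
    using diag_lim_separated_at_index[OF assms(1)] by blast
  obtain x where x: "g x \<noteq> h x" using \<open>g \<noteq> h\<close> by blast
  then have "x \<in> F" "x \<noteq> b" using g h unfolding F_def smash_def by auto
  then have "x t \<noteq> base t" using t inj_onD[OF t(2), of x b] unfolding F_def b_def by auto
  have recover: "push (\<lambda>x. x t) (base t) k (x t) = k x" if "\<And>s. k s \<noteq> 0 \<Longrightarrow> s \<in> F" for k
    using push_at_image_of_injective[of "\<lambda>x. x t" F k x "base t"] t(2) that \<open>x \<in> F\<close> \<open>x t \<noteq> base t\<close>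
    by simp
  have "g x = push (\<lambda>x. x t) (base t) g (x t)" by (rule recover[symmetric]) (simp add: F_def)
  also have "\<dots> = push (\<lambda>x. x t) (base t) h (x t)"
    using fun_cong[OF eq, of t] t unfolding rho_def by simp
  also have "\<dots> = h x" by (rule recover) (simp add: F_def)
  finally show False using x by simp
qed

end
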